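(* Let $\mathcal{X}\subset\mathbb{R}^d$ be bounded and $\mathcal{Y}\subset\mathbb{R}$. Let $p_{\mathcal{D}}$ (the data source distribution) and $p_{\mathcal{L}}$ (the training data distribution) be probability densities on $\mathcal{X}\times\mathcal{Y}$ with marginals $p_{\mathcal{X}_{\mathcal{D}}}(\mathbf{x})=\int_{\mathcal{Y}}p_{\mathcal{D}}(\mathbf{x},y)\,dy$ and $p_{\mathcal{X}_{\mathcal{L}}}(\mathbf{x})=\int_{\mathcal{Y}}p_{\mathcal{L}}(\mathbf{x},y)\,dy$, and with common conditional density $p(y\mid\mathbf{x}):=p_{\mathcal{D}}(y\mid\mathbf{x})=p_{\mathcal{L}}(y\mid\mathbf{x})$. Let $\mathcal{L}=\{(\mathbf{x}_j,y_j)\}_{j=1}^b$ be a labeled set with locations $\mathcal{L}_{\mathcal{X}}=\{\mathbf{x}_j\}_{j=1}^b$ sampled from $p_{\mathcal{L}}$, let $m_{\mathcal{L}}\in\mathcal{M}$ be a regression model trained on $\mathcal{L}$, and let $l:\mathcal{X}\times\mathcal{Y}\times\mathcal{M}\to\mathbb{R}^+$ be an error function. Write $\mathbb{E}[\,\cdot\mid\mathbf{x}]$ for expectation of $Y$ with respect to $p(y\mid\mathbf{x})$. Assume: (A1) For every $\mathbf{x}_q\in\mathcal{X}$, $\mathbb{E}[|Y|\mid\mathbf{x}_q]<\infty$, and there is $\epsilon\ge 0$ with $\mathbb{E}\big[\,|Y-\mathbb{E}[Y\mid\mathbf{x}_q]|\,\big|\,\mathbf{x}_q\big]\le\epsilon$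 for all $\mathbf{x}_q\in\mathcal{X}$; moreover there is $\lambda_p\in\mathbb{R}^+$ with $|\mathbb{E}[Y\mid\hat{\mathbf{x}}]-\mathbb{E}[Y\mid\tilde{\mathbf{x}}]|\le\lambda_p\|\hat{\mathbf{x}}-\tilde{\mathbf{x}}\|_2$ for all $\hat{\mathbf{x}},\tilde{\mathbf{x}}\in\mathcal{X}$. (A2) There is $\epsilon_{\mathcal{L}}\ge 0$ with $\mathbb{E}[l(\mathbf{x}_j,Y,m_{\mathcal{L}})\mid\mathbf{x}_j]\le\epsilon_{\mathcal{L}}$ for every $(\mathbf{x}_j,y_j)\in\mathcal{L}$; for every $y\in\mathcal{Y}$ the map $l(\cdot,y,m_{\mathcal{L}})$ is $\lambda_{l_{\mathcal{X}}}$-Lipschitz; and for every $\mathbf{x}\in\mathcal{X}$ the map $l(\mathbf{x},\cdot,m_{\mathcal{L}})$ is $\lambda_{l_{\mathcal{Y}}}$-Lipschitz and convex, with $\mathbb{E}[|l(\mathbf{x},Y,m_{\mathcal{L}})|\mid\mathbf{x}]<\infty$. Then, with $C:=\lambda_{l_{\mathcal{X}}}+\lambda_{l_{\mathcal{Y}}}\lambda_p$, $$\mathbb{E}_{p_{\mathcal{D}}}[l(\mathbf{X},Y,m_{\mathcal{L}})]\le C\,W_{\mathcal{L}_{\mathcal{X}},\mathcal{X}}(p_{\mathcal{X}_{\mathcal{L}}}\,\|\,p_{\mathcal{X}_{\mathcal{D}}})+\lambda_{l_{\mathcal{Y}}}\epsilon+\epsilon_{\mathcal{L}}+\mathbb{E}_{p_{\mathcal{L}}}[l(\mathbf{X},Y,m_{\mathcal{L}})],$$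 where $W_{\mathcal{L}_{\mathcal{X}},\mathcal{X}}$ is the weighted fill distance defined in the context.
   Context: The weighted fill distance of $\mathcal{L}_{\mathcal{X}}=\{\mathbf{x}_j\}_{j=1}^b\subset\mathcal{X}$ in $\mathcal{X}$ with respect to $p_{\mathcal{X}_{\mathcal{D}}}$ is $$W_{\mathcal{L}_{\mathcal{X}},\mathcal{X}}(p_{\mathcal{X}_{\mathcal{L}}}\,\|\,p_{\mathcal{X}_{\mathcal{D}}}):=\sup_{\mathbf{x}\in\mathcal{X}}\min_{\mathbf{x}_j\in\mathcal{L}_{\mathcal{X}}}\|\mathbf{x}-\mathbf{x}_j\|_2\,\psi_{\mathcal{L}_{\mathcal{X}}}(\mathbf{x}),$$ with weight function $\psi_{\mathcal{L}_{\mathcal{X}}}(\mathbf{x})=1-p_{\mathcal{X}_{\mathcal{L}}}(\mathbf{x})/p_{\mathcal{X}_{\mathcal{D}}}(\mathbf{x})$ if $p_{\mathcal{X}_{\mathcal{D}}}(\mathbf{x})\neq 0$ and $\psi_{\mathcal{L}_{\mathcal{X}}}(\mathbf{x})=0$ otherwise. $\mathbb{E}_{p}[l(\mathbf{X},Y,m_{\mathcal{L}})]$ denotes the expectation of $l(\mathbf{X},Y,m_{\mathcal{L}})$ with $(\mathbf{X},Y)\sim p$, for fixed trained model $m_{\mathcal{L}}$. *)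

theory Defs
  imports "HOL-Analysis.Analysis"
begin

definition prob_density_on :: "'b::euclidean_space set \<Rightarrow> ('b \<Rightarrow> real) \<Rightarrow> bool" where
  "prob_density_on S p \<longleftrightarrow> p \<in> borel_measurable lborel \<and> (\<forall>z\<in>S. 0 \<le> p z)
     \<and> set_integrable lborel S p \<and> (LINT z:S|lborel. p z) = 1"

definition marginal :: "('a::euclidean_space \<times> real \<Rightarrow> real) \<Rightarrow> real set \<Rightarrow> 'a \<Rightarrow> real" where
  "marginal p Y x = (LINT y:Y|lborel. p (x, y))"

text \<open>Conditional expectation E[f(Y) | x] w.r.t. the conditional density q(y|x) = q x y on Y.\<close>
definition cond_expect :: "('a \<Rightarrow> real \<Rightarrow> real) \<Rightarrow> real set \<Rightarrow> 'a \<Rightarrow> (real \<Rightarrow> real) \<Rightarrow> real" where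
  "cond_expect q Y x f = (LINT y:Y|lborel. q x y * f y)"

definition joint_expect :: "('a::euclidean_space \<times> real \<Rightarrow> real) \<Rightarrow> 'a set \<Rightarrow> real set
    \<Rightarrow> ('a \<Rightarrow> real \<Rightarrow> real) \<Rightarrow> real" where
  "joint_expect p X Y g = (LINT z:(X \<times> Y)|lborel. p z * g (fst z) (snd z))"

definition fill_weight :: "('a \<Rightarrow> real) \<Rightarrow> ('a \<Rightarrow> real) \<Rightarrow> 'a \<Rightarrow> real" where
  "fill_weight pXL pXD x = (if pXD x \<noteq> 0 then 1 - pXL x / pXD x else 0)"

definition weighted_fill_distance ::
  "'a::euclidean_space set \<Rightarrow> 'a set \<Rightarrow> ('a \<Rightarrow> real) \<Rightarrow> ('a \<Rightarrow> real) \<Rightarrow> real" where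
  "weighted_fill_distance LX X pXL pXD =
     (SUP x\<in>X. Min ((\<lambda>xj. norm (x - xj)) ` LX) * fill_weight pXL pXD x)"

end

(*
  Let g x be the conditional risk E[l(x, Y, m_L) | x]. Because both joint densities factor
  through the same conditional density q, Fubini gives
    E_pD[l] - E_pL[l] = \<integral>_X (p_XD - p_XL) g = \<integral>_X p_XD \<psi> g,
  so it suffices to bound \<psi> x * g x by C W + \<lambda>_lY \<epsilon> + \<epsilon>_L pointwise. For a nearest training
  location x_j, Lipschitz continuity of l in x, Lipschitz continuity of l in y around the
  conditional mean, Lipschitz continuity of the conditional mean and Jensen's inequality give
    g x \<le> g x_j + \<lambda>_lY \<epsilon> + C |x - x_j| \<le> \<epsilon>_L + \<lambda>_lY \<epsilon> + C |x - x_j|,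
  and multiplying by \<psi> x \<le> 1 and taking the supremum over x produces the weighted fill distance.
*)

theory Submission
  imports Defs
begin

section \<open>Probability densities on the real line\<close>

lemma prob_density_onD:
  assumes "prob_density_on S p"
  shows "p \<in> borel_measurable lborel" "\<And>z. z \<in> S \<Longrightarrow> 0 \<le> p z"
    "set_integrable lborel S p" "(LINT z:S|lborel. p z) = 1"
  using assms unfolding prob_density_on_def by auto

lemma convex_diff_interior_null_sets:
  fixes Y :: "real set"
  assumes "Y \<in> sets lborel" and "convex Y"
  shows "Y - interior Y \<in> null_sets lborel"
proof -
  have "frontier Y \<in> null_sets lebesgue"
    using negligible_convex_frontier[OF \<open>convex Y\<close>] by (simp add: negligible_iff_null_sets)
  then have "frontier Y \<in> null_sets lborel"
    by (simp add: null_sets_completion_iff frontier_closed borel_closed)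
  moreover have "Y - interior Y \<subseteq> frontier Y"
    using closure_subset by (auto simp: frontier_def)
  moreover have "Y - interior Y \<in> sets lborel"
    using assms(1) by auto
  ultimately show ?thesis
    using null_sets_subset by blast
qed

lemma density_integral_affine:
  fixes f h :: "real \<Rightarrow> real"
  assumes f: "prob_density_on Y f" and fh: "set_integrable lborel Y (\<lambda>y. f y * h y)"
  shows "set_integrable lborel Y (\<lambda>y. f y * (a + b * h y))"
    and "(LINT y:Y|lborel. f y * (a + b * h y)) = a + b * (LINT y:Y|lborel. f y * h y)"
proof -
  have eq: "f y * (a + b * h y) = a * f y + b * (f y * h y)" for y
    by (simp add: algebra_simps)
  show "set_integrable lborel Y (\<lambda>y. f y * (a + b * h y))"
    unfolding eq using prob_density_onD(3)[OF f] fh by auto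
  show "(LINT y:Y|lborel. f y * (a + b * h y)) = a + b * (LINT y:Y|lborel. f y * h y)"
    unfolding eq using prob_density_onD(3,4)[OF f] fh by simp
qed

lemma convex_real_one_side:
  fixes S :: "real set"
  assumes "convex S" and "m \<notin> S"
  obtains s where "\<And>z. z \<in> S \<Longrightarrow> 0 < s * (z - m)"
proof -
  have "(\<forall>z\<in>S. m < z) \<or> (\<forall>z\<in>S. z < m)"
    using assms unfolding is_interval_convex_1[symmetric] is_interval_1 by (metis linorder_not_le)
  then show thesis
  proof
    assume "\<forall>z\<in>S. m < z"
    then show thesis by (intro that[of 1]) auto
  next
    assume "\<forall>z\<in>S. z < m"
    then show thesis by (intro that[of "-1"]) auto
  qed
qed

lemma density_mean_in_interior:
  fixes Y :: "real set" and f :: "real \<Rightarrow> real"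
  assumes f: "prob_density_on Y f" and Y: "Y \<in> sets lborel" "convex Y"
    and fy: "set_integrable lborel Y (\<lambda>y. f y * y)"
  shows "(LINT y:Y|lborel. f y * y) \<in> interior Y"
proof (rule ccontr)
  define m where "m = (LINT y:Y|lborel. f y * y)"
  assume "m \<notin> interior Y"
  \<comment> \<open>Then \<open>y - m\<close> has a constant sign \<open>s\<close> almost everywhere on \<open>Y\<close>, and
    \<open>\<integral>\<^sub>Y f y * s * (y - m) = 0\<close> forces \<open>f = 0\<close> almost everywhere.\<close>
  then obtain s :: real where s: "\<And>z. z \<in> interior Y \<Longrightarrow> 0 < s * (z - m)"
    using convex_real_one_side[OF convex_interior[OF \<open>convex Y\<close>]] by blast
  define g where "g = (\<lambda>y. indicator Y y * (f y * (- s * m + s * y)))"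
  have g_int: "integrable lborel g" and g_zero: "integral\<^sup>L lborel g = 0"
    using density_integral_affine[OF f fy, of "- s * m" s]
    by (simp_all add: g_def m_def set_integrable_def set_lebesgue_integral_def)
  have g_eq: "g y = indicator Y y * f y * (s * (y - m))" for y
    by (simp add: g_def algebra_simps)
  have interior_ae: "AE y in lborel. y \<in> Y \<longrightarrow> y \<in> interior Y"
    using AE_not_in[OF convex_diff_interior_null_sets[OF Y]] by auto
  then have g_nonneg: "AE y in lborel. 0 \<le> g y"
  proof eventually_elim
    case (elim y)
    show ?case
    proof (cases "y \<in> Y")
      case True
      then show ?thesis
        using s[of y] elim prob_density_onD(2)[OF f True] by (simp add: g_eq)
    qed (simp add: g_eq)
  qed
  then have "AE y in lborel. g y = 0"
    using integral_nonneg_eq_0_iff_AE[OF g_int] g_zero by simp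
  with interior_ae have f_zero: "AE y in lborel. indicator Y y * f y = 0"
    by eventually_elim (use s in \<open>fastforce simp: g_eq\<close>)
  have "(LINT y:Y|lborel. f y) = 0"
    unfolding set_lebesgue_integral_def by (rule integral_eq_zero_AE) (use f_zero in simp)
  with prob_density_onD(4)[OF f] show False by simp
qed

lemma density_abs_dev_integrable:
  fixes f :: "real \<Rightarrow> real"
  assumes f: "prob_density_on Y f" and fy: "set_integrable lborel Y (\<lambda>y. f y * y)"
  shows "set_integrable lborel Y (\<lambda>y. f y * \<bar>y - m\<bar>)"
proof -
  have eq: "\<bar>f y * (y - m)\<bar> = f y * \<bar>y - m\<bar>" if "y \<in> Y" for y
    using prob_density_onD(2)[OF f that] by (simp add: abs_mult)
  have "set_integrable lborel Y (\<lambda>y. \<bar>f y * (y - m)\<bar>) = ?thesis"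
    by (rule set_integrable_cong) (simp_all add: eq)
  then show ?thesis
    using set_integrable_abs[OF density_integral_affine(1)[OF f fy, of "- m" 1]] by simp
qed

lemma density_jensen:
  fixes f \<phi> :: "real \<Rightarrow> real"
  assumes f: "prob_density_on Y f" and Y: "Y \<in> sets lborel" and \<phi>: "convex_on Y \<phi>"
    and fy: "set_integrable lborel Y (\<lambda>y. f y * y)"
    and f\<phi>: "set_integrable lborel Y (\<lambda>y. f y * \<phi> y)"
  shows "\<phi> (LINT y:Y|lborel. f y * y) \<le> (LINT y:Y|lborel. f y * \<phi> y)"
proof -
  define m where "m = (LINT y:Y|lborel. f y * y)"
  have "m \<in> interior Y"
    unfolding m_def using \<phi> by (intro density_mean_in_interior[OF f Y _ fy]) (simp add: convex_on_def)
  then obtain c where tangent: "\<And>y. y \<in> Y \<Longrightarrow> \<phi> m + c * (y - m) \<le> \<phi> y"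
    using convex_le_Inf_differential[OF \<phi>] by blast
  have "\<phi> m = (LINT y:Y|lborel. f y * ((\<phi> m - c * m) + c * y))"
    using density_integral_affine(2)[OF f fy] by (simp add: m_def)
  also have "\<dots> \<le> (LINT y:Y|lborel. f y * \<phi> y)"
  proof (rule set_integral_mono[OF density_integral_affine(1)[OF f fy] f\<phi>])
    fix y assume y: "y \<in> Y"
    have "(\<phi> m - c * m) + c * y \<le> \<phi> y"
      using tangent[OF y] by (simp add: algebra_simps)
    then show "f y * ((\<phi> m - c * m) + c * y) \<le> f y * \<phi> y"
      using prob_density_onD(2)[OF f y] by (rule mult_left_mono)
  qed
  finally show ?thesis
    unfolding m_def .
qed

lemma density_lipschitz_le:
  fixes f \<phi> :: "real \<Rightarrow> real"
  assumes f: "prob_density_on Y f" and m: "m \<in> Y" and \<phi>: "L-lipschitz_on Y \<phi>"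
    and f\<phi>: "set_integrable lborel Y (\<lambda>y. f y * \<phi> y)"
    and fdev: "set_integrable lborel Y (\<lambda>y. f y * \<bar>y - m\<bar>)"
  shows "(LINT y:Y|lborel. f y * \<phi> y) \<le> \<phi> m + L * (LINT y:Y|lborel. f y * \<bar>y - m\<bar>)"
proof -
  have "(LINT y:Y|lborel. f y * \<phi> y) \<le> (LINT y:Y|lborel. f y * (\<phi> m + L * \<bar>y - m\<bar>))"
  proof (rule set_integral_mono[OF f\<phi> density_integral_affine(1)[OF f fdev]])
    fix y assume y: "y \<in> Y"
    have "\<phi> y \<le> \<phi> m + L * \<bar>y - m\<bar>"
      using lipschitz_onD[OF \<phi> y m] by (auto simp: dist_real_def)
    then show "f y * \<phi> y \<le> f y * (\<phi> m + L * \<bar>y - m\<bar>)"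
      using prob_density_onD(2)[OF f y] by (rule mult_left_mono)
  qed
  also have "\<dots> = \<phi> m + L * (LINT y:Y|lborel. f y * \<bar>y - m\<bar>)"
    by (rule density_integral_affine(2)[OF f fdev])
  finally show ?thesis .
qed

section \<open>Joint densities with a common conditional density\<close>

lemma prob_density_on_marginal:
  fixes p :: "'a::euclidean_space \<times> real \<Rightarrow> real"
  assumes p: "prob_density_on (X \<times> Y) p" and Y: "Y \<in> sets lborel"
  shows "prob_density_on X (marginal p Y)"
proof -
  define G where "G z = indicator (X \<times> Y) z * p z" for z
  have G_int: "integrable (lborel \<Otimes>\<^sub>M lborel) G"
    using prob_density_onD(3)[OF p] unfolding set_integrable_def G_def lborel_prod by simp
  have inner: "(\<integral>y. G (x, y) \<partial>lborel) = indicator X x * marginal p Y x" for x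
    unfolding G_def marginal_def set_lebesgue_integral_def by (simp add: indicator_times mult.assoc)
  have [measurable]: "p \<in> borel_measurable (lborel \<Otimes>\<^sub>M lborel)"
    using prob_density_onD(1)[OF p] by (simp add: lborel_prod)
  have "marginal p Y \<in> borel_measurable lborel"
    unfolding marginal_def set_lebesgue_integral_def using Y by measurable
  moreover have "set_integrable lborel X (marginal p Y)"
    using lborel_pair.integrable_fst'[OF G_int] unfolding inner set_integrable_def by simp
  moreover have "(LINT x:X|lborel. marginal p Y x) = 1"
  proof -
    have "(\<integral>x. (\<integral>y. G (x, y) \<partial>lborel) \<partial>lborel) = integral\<^sup>L (lborel \<Otimes>\<^sub>M lborel) G"
      by (rule lborel_pair.integral_fst'[OF G_int])
    also have "\<dots> = 1"
      using prob_density_onD(4)[OF p] unfolding G_def lborel_prod set_lebesgue_integral_def by simp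
    finally show ?thesis
      unfolding inner set_lebesgue_integral_def by simp
  qed
  moreover have "0 \<le> marginal p Y x" if "x \<in> X" for x
    unfolding marginal_def set_lebesgue_integral_def using prob_density_onD(2)[OF p] that
    by (intro Bochner_Integration.integral_nonneg) (auto simp: indicator_def)
  ultimately show ?thesis
    unfolding prob_density_on_def by blast
qed

lemma density_mult_bounded_integrable:
  assumes m: "prob_density_on X m" and g: "set_borel_measurable lborel X (\<lambda>x. m x * g x)"
    and bounded: "\<And>x. x \<in> X \<Longrightarrow> \<bar>g x\<bar> \<le> B"
  shows "set_integrable lborel X (\<lambda>x. m x * g x)"
proof (rule set_integrable_bound[OF _ g])
  show "set_integrable lborel X (\<lambda>x. B * m x)"
    using prob_density_onD(3)[OF m] by simp
  show "AE x in lborel. x \<in> X \<longrightarrow> norm (m x * g x) \<le> norm (B * m x)"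
  proof (rule AE_I2, rule impI)
    fix x assume x: "x \<in> X"
    have "m x * \<bar>g x\<bar> \<le> m x * B"
      using bounded[OF x] prob_density_onD(2)[OF m x] by (rule mult_left_mono)
    moreover have "0 \<le> B"
      using bounded[OF x] by linarith
    ultimately show "norm (m x * g x) \<le> norm (B * m x)"
      using prob_density_onD(2)[OF m x] by (simp add: abs_mult mult.commute)
  qed
qed

lemma joint_expect_eq_integral_cond_expect:
  fixes p :: "'a::euclidean_space \<times> real \<Rightarrow> real" and q h :: "'a \<Rightarrow> real \<Rightarrow> real"
  assumes p: "prob_density_on (X \<times> Y) p" and X: "X \<in> sets lborel" and Y: "Y \<in> sets lborel"
    and p_cond: "\<And>x y. x \<in> X \<Longrightarrow> y \<in> Y \<Longrightarrow> p (x, y) = marginal p Y x * q x y"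
    and h_meas: "(\<lambda>z. h (fst z) (snd z)) \<in> borel_measurable lborel"
    and h_nonneg: "\<And>x y. x \<in> X \<Longrightarrow> y \<in> Y \<Longrightarrow> 0 \<le> h x y"
    and qh_int: "\<And>x. x \<in> X \<Longrightarrow> set_integrable lborel Y (\<lambda>y. q x y * h x y)"
    and bounded: "\<And>x. x \<in> X \<Longrightarrow> \<bar>cond_expect q Y x (h x)\<bar> \<le> B"
  shows "set_integrable lborel X (\<lambda>x. marginal p Y x * cond_expect q Y x (h x))"
    and "joint_expect p X Y h = (LINT x:X|lborel. marginal p Y x * cond_expect q Y x (h x))"
proof -
  define F where "F z = indicator (X \<times> Y) z * (p z * h (fst z) (snd z))" for z
  have [measurable]: "p \<in> borel_measurable (lborel \<Otimes>\<^sub>M lborel)"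
    "(\<lambda>z. h (fst z) (snd z)) \<in> borel_measurable (lborel \<Otimes>\<^sub>M lborel)"
    using prob_density_onD(1)[OF p] h_meas by (simp_all add: lborel_prod)
  have [measurable]: "X \<in> sets lborel" "Y \<in> sets lborel"
    using X Y by simp_all
  have F_meas: "F \<in> borel_measurable (lborel \<Otimes>\<^sub>M lborel)"
    unfolding F_def by measurable
  have F_nonneg: "0 \<le> F z" for z
    using prob_density_onD(2)[OF p] h_nonneg unfolding F_def by (cases z) (auto simp: indicator_def)
  have F_section: "F (x, y) = indicator X x * (marginal p Y x * (indicator Y y * (q x y * h x y)))" for x y
    using p_cond unfolding F_def by (auto simp: indicator_def)
  have inner: "(\<integral>y. F (x, y) \<partial>lborel) = indicator X x * (marginal p Y x * cond_expect q Y x (h x))" for x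
    unfolding F_section cond_expect_def set_lebesgue_integral_def by simp
  have inner_int: "integrable lborel (\<lambda>y. F (x, y))" for x
    using qh_int[of x] unfolding F_section set_integrable_def by (cases "x \<in> X") simp_all
  have "(\<lambda>x. \<integral>y. F (x, y) \<partial>lborel) \<in> borel_measurable lborel"
    using F_meas by measurable
  then have "set_borel_measurable lborel X (\<lambda>x. marginal p Y x * cond_expect q Y x (h x))"
    unfolding inner set_borel_measurable_def by simp
  then show "set_integrable lborel X (\<lambda>x. marginal p Y x * cond_expect q Y x (h x))"
    using bounded by (rule density_mult_bounded_integrable[OF prob_density_on_marginal[OF p Y]])
  then have outer_int: "integrable lborel (\<lambda>x. \<integral>y. F (x, y) \<partial>lborel)"
    unfolding inner set_integrable_def by simp
  have F_int: "integrable (lborel \<Otimes>\<^sub>M lborel) F"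
    using lborel_pair.Fubini_integrable[OF F_meas _ AE_I2[OF inner_int]] outer_int F_nonneg by simp
  have "joint_expect p X Y h = integral\<^sup>L (lborel \<Otimes>\<^sub>M lborel) F"
    unfolding joint_expect_def set_lebesgue_integral_def F_def lborel_prod by simp
  also have "\<dots> = (\<integral>x. (\<integral>y. F (x, y) \<partial>lborel) \<partial>lborel)"
    by (rule lborel_pair.integral_fst'[OF F_int, symmetric])
  finally show "joint_expect p X Y h = (LINT x:X|lborel. marginal p Y x * cond_expect q Y x (h x))"
    unfolding inner set_lebesgue_integral_def by simp
qed

section \<open>The fill weight and the weighted fill distance\<close>

lemma fill_weight_mult:
  "pXD x \<noteq> 0 \<Longrightarrow> pXD x * fill_weight pXL pXD x = pXD x - pXL x"
  by (simp add: fill_weight_def right_diff_distrib)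

lemma fill_weight_le_one:
  "0 \<le> pXL x \<Longrightarrow> 0 \<le> pXD x \<Longrightarrow> fill_weight pXL pXD x \<le> 1"
  by (simp add: fill_weight_def)

lemma diff_mult_le_fill_weight_bound:
  fixes g R :: real
  assumes "0 \<le> pXD x" "0 \<le> pXL x" "0 \<le> g" and "fill_weight pXL pXD x * g \<le> R"
  shows "(pXD x - pXL x) * g \<le> pXD x * R"
proof (cases "pXD x = 0")
  case True
  then show ?thesis
    using assms(2,3) by simp
next
  case False
  have "(pXD x - pXL x) * g = pXD x * (fill_weight pXL pXD x * g)"
    using fill_weight_mult[where pXL = pXL and pXD = pXD, OF False] by (metis mult.assoc)
  also have "\<dots> \<le> pXD x * R"
    using assms(4,1) by (rule mult_left_mono)
  finally show ?thesis .
qed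

lemma joint_expect_le_fill_weight_bound:
  fixes pD pL :: "'a::euclidean_space \<times> real \<Rightarrow> real" and q h :: "'a \<Rightarrow> real \<Rightarrow> real"
  assumes X: "X \<in> sets lborel" and Y: "Y \<in> sets lborel"
    and pD: "prob_density_on (X \<times> Y) pD" and pL: "prob_density_on (X \<times> Y) pL"
    and pD_cond: "\<And>x y. x \<in> X \<Longrightarrow> y \<in> Y \<Longrightarrow> pD (x, y) = marginal pD Y x * q x y"
    and pL_cond: "\<And>x y. x \<in> X \<Longrightarrow> y \<in> Y \<Longrightarrow> pL (x, y) = marginal pL Y x * q x y"
    and h_meas: "(\<lambda>z. h (fst z) (snd z)) \<in> borel_measurable lborel"
    and h_nonneg: "\<And>x y. x \<in> X \<Longrightarrow> y \<in> Y \<Longrightarrow> 0 \<le> h x y"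
    and qh_int: "\<And>x. x \<in> X \<Longrightarrow> set_integrable lborel Y (\<lambda>y. q x y * h x y)"
    and g_nonneg: "\<And>x. x \<in> X \<Longrightarrow> 0 \<le> cond_expect q Y x (h x)"
    and g_bounded: "\<And>x. x \<in> X \<Longrightarrow> cond_expect q Y x (h x) \<le> B"
    and weighted_le: "\<And>x. x \<in> X \<Longrightarrow>
      fill_weight (marginal pL Y) (marginal pD Y) x * cond_expect q Y x (h x) \<le> R"
  shows "joint_expect pD X Y h \<le> R + joint_expect pL X Y h"
proof -
  define g where "g x = cond_expect q Y x (h x)" for x
  have g_abs: "\<bar>cond_expect q Y x (h x)\<bar> \<le> B" if "x \<in> X" for x
    using g_nonneg[OF that] g_bounded[OF that] by simp
  note D = joint_expect_eq_integral_cond_expect[OF pD X Y pD_cond h_meas h_nonneg qh_int g_abs]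
  note L = joint_expect_eq_integral_cond_expect[OF pL X Y pL_cond h_meas h_nonneg qh_int g_abs]
  have mD: "prob_density_on X (marginal pD Y)" and mL: "prob_density_on X (marginal pL Y)"
    using prob_density_on_marginal Y pD pL by blast+
  have "joint_expect pD X Y h - joint_expect pL X Y h
      = (LINT x:X|lborel. marginal pD Y x * g x - marginal pL Y x * g x)"
    using set_integral_diff(2)[OF D(1) L(1)] by (simp add: D(2) L(2) g_def)
  also have "\<dots> \<le> (LINT x:X|lborel. marginal pD Y x * R)"
  proof (rule set_integral_mono)
    show "set_integrable lborel X (\<lambda>x. marginal pD Y x * g x - marginal pL Y x * g x)"
      unfolding g_def by (rule set_integral_diff(1)[OF D(1) L(1)])
    show "set_integrable lborel X (\<lambda>x. marginal pD Y x * R)"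
      using prob_density_onD(3)[OF mD] by simp
    fix x assume x: "x \<in> X"
    show "marginal pD Y x * g x - marginal pL Y x * g x \<le> marginal pD Y x * R"
      using diff_mult_le_fill_weight_bound[OF prob_density_onD(2)[OF mD x] prob_density_onD(2)[OF mL x]
          g_nonneg[OF x] weighted_le[OF x]]
      unfolding g_def by (simp add: left_diff_distrib)
  qed
  also have "\<dots> = R"
    using prob_density_onD(4)[OF mD] by simp
  finally show ?thesis
    by simp
qed

lemma Min_norm_diff_le_diameter:
  fixes X LX :: "'a::real_normed_vector set"
  assumes "bounded X" and "finite LX" "x0 \<in> LX" "LX \<subseteq> X" and "x \<in> X"
  shows "Min ((\<lambda>xj. norm (x - xj)) ` LX) \<le> diameter X"
proof -
  have "Min ((\<lambda>xj. norm (x - xj)) ` LX) \<le> norm (x - x0)"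
    using assms(2,3) by (intro Min_le) auto
  also have "\<dots> \<le> diameter X"
    using diameter_bounded_bound[OF assms(1,5), of x0] assms(3,4) by (auto simp: dist_norm)
  finally show ?thesis .
qed

lemma weighted_fill_distance_upper:
  fixes X LX :: "'a::euclidean_space set"
  assumes X: "bounded X" and LX: "finite LX" "LX \<noteq> {}"
    and dens: "\<And>x. x \<in> X \<Longrightarrow> 0 \<le> pXL x" "\<And>x. x \<in> X \<Longrightarrow> 0 \<le> pXD x"
    and x: "x \<in> X"
  shows "Min ((\<lambda>xj. norm (x - xj)) ` LX) * fill_weight pXL pXD x \<le> weighted_fill_distance LX X pXL pXD"
  unfolding weighted_fill_distance_def
proof (rule cSUP_upper[OF x])
  obtain x0 where x0: "x0 \<in> LX"
    using LX(2) by blast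
  obtain M where M: "\<And>x. x \<in> X \<Longrightarrow> norm x \<le> M"
    using X bounded_iff by blast
  have "Min ((\<lambda>xj. norm (x - xj)) ` LX) * fill_weight pXL pXD x \<le> M + norm x0" if "x \<in> X" for x
  proof -
    have "0 \<le> Min ((\<lambda>xj. norm (x - xj)) ` LX)"
      using LX by simp
    then have "Min ((\<lambda>xj. norm (x - xj)) ` LX) * fill_weight pXL pXD x \<le> Min ((\<lambda>xj. norm (x - xj)) ` LX)"
      using fill_weight_le_one[where pXL = pXL and pXD = pXD, OF dens(1,2)[OF that]] by (simp add: mult_left_le)
    also have "\<dots> \<le> norm (x - x0)"
      using LX(1) x0 by (intro Min_le) auto
    also have "\<dots> \<le> M + norm x0"
      using norm_triangle_ineq4[of x x0] M[OF that] by linarith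
    finally show ?thesis .
  qed
  then show "bdd_above ((\<lambda>x. Min ((\<lambda>xj. norm (x - xj)) ` LX) * fill_weight pXL pXD x) ` X)"
    by (intro bdd_aboveI2)
qed

lemma weighted_fill_distance_nonneg:
  fixes X LX :: "'a::euclidean_space set"
  assumes "bounded X" and "finite LX" "LX \<noteq> {}" "LX \<subseteq> X"
    and "\<And>x. x \<in> X \<Longrightarrow> 0 \<le> pXL x" "\<And>x. x \<in> X \<Longrightarrow> 0 \<le> pXD x"
  shows "0 \<le> weighted_fill_distance LX X pXL pXD"
proof -
  obtain xj where xj: "xj \<in> LX"
    using assms(3) by blast
  have "Min ((\<lambda>x. norm (xj - x)) ` LX) = 0"
    using assms(2,3) xj by (intro antisym Min_le) auto
  then show ?thesis
    using weighted_fill_distance_upper[OF assms(1-3,5,6), where x = xj] xj assms(4) by auto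
qed

lemma weight_mult_le_affine_bound:
  fixes \<psi> g d C K W :: real
  assumes "0 \<le> g" "g \<le> C * d + K" "0 \<le> C" "0 \<le> K" "d * \<psi> \<le> W" "0 \<le> W" "\<psi> \<le> 1"
  shows "\<psi> * g \<le> C * W + K"
proof (cases "\<psi> \<le> 0")
  case True
  then have "\<psi> * g \<le> 0"
    using assms(1) by (rule mult_nonpos_nonneg)
  also have "0 \<le> C * W + K"
    using assms(3,4,6) by simp
  finally show ?thesis .
next
  case False
  then have "\<psi> * g \<le> C * (d * \<psi>) + \<psi> * K"
    using mult_left_mono[OF assms(2), of \<psi>] by (simp add: algebra_simps)
  also have "\<dots> \<le> C * W + K"
    using assms(3-7) False by (intro add_mono mult_left_mono mult_left_le_one_le) auto
  finally show ?thesis .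
qed

lemma fill_weight_mult_le_fill_distance:
  fixes X LX :: "'a::euclidean_space set" and g :: "'a \<Rightarrow> real"
  assumes X: "bounded X" and LX: "finite LX" "LX \<noteq> {}" "LX \<subseteq> X"
    and dens: "\<And>x. x \<in> X \<Longrightarrow> 0 \<le> pXL x" "\<And>x. x \<in> X \<Longrightarrow> 0 \<le> pXD x"
    and C: "0 \<le> C" and K: "0 \<le> K"
    and g: "\<And>x. x \<in> X \<Longrightarrow> 0 \<le> g x" "\<And>x. x \<in> X \<Longrightarrow> g x \<le> C * Min ((\<lambda>xj. norm (x - xj)) ` LX) + K"
    and x: "x \<in> X"
  shows "fill_weight pXL pXD x * g x \<le> C * weighted_fill_distance LX X pXL pXD + K"
  using g(1,2)[OF x] C K weighted_fill_distance_upper[OF X LX(1,2) dens x]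
    weighted_fill_distance_nonneg[OF X LX dens]
    fill_weight_le_one[where pXL = pXL and pXD = pXD, OF dens(1,2)[OF x]]
  by (rule weight_mult_le_affine_bound)

section \<open>Lipschitz losses with a Lipschitz conditional mean\<close>

locale lipschitz_conditional_loss =
  fixes X :: "'a::euclidean_space set" and Y :: "real set"
    and q :: "'a \<Rightarrow> real \<Rightarrow> real" and f :: "'a \<Rightarrow> real \<Rightarrow> real"
    and eps lam_p lam_X lam_Y :: real
  assumes Y_meas: "Y \<in> sets lborel"
    and q_dens: "\<And>x. x \<in> X \<Longrightarrow> prob_density_on Y (q x)"
    and f_meas: "(\<lambda>z. f (fst z) (snd z)) \<in> borel_measurable lborel"
    and f_nonneg: "\<And>x y. x \<in> X \<Longrightarrow> y \<in> Y \<Longrightarrow> 0 \<le> f x y"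
    and abs_mean_int: "\<And>x. x \<in> X \<Longrightarrow> set_integrable lborel Y (\<lambda>y. q x y * \<bar>y\<bar>)"
    and mean_dev_le: "\<And>x. x \<in> X \<Longrightarrow>
      cond_expect q Y x (\<lambda>y. \<bar>y - cond_expect q Y x (\<lambda>y. y)\<bar>) \<le> eps"
    and mean_lipschitz: "\<And>x x'. x \<in> X \<Longrightarrow> x' \<in> X \<Longrightarrow>
      \<bar>cond_expect q Y x (\<lambda>y. y) - cond_expect q Y x' (\<lambda>y. y)\<bar> \<le> lam_p * norm (x - x')"
    and lipschitz_X: "\<And>y. y \<in> Y \<Longrightarrow> lam_X-lipschitz_on X (\<lambda>x. f x y)"
    and lipschitz_Y: "\<And>x. x \<in> X \<Longrightarrow> lam_Y-lipschitz_on Y (f x)"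
    and convex_Y: "\<And>x. x \<in> X \<Longrightarrow> convex_on Y (f x)"
    and abs_risk_int: "\<And>x. x \<in> X \<Longrightarrow> set_integrable lborel Y (\<lambda>y. q x y * \<bar>f x y\<bar>)"
begin

abbreviation mean :: "'a \<Rightarrow> real" where
  "mean x \<equiv> cond_expect q Y x (\<lambda>y. y)"

abbreviation risk :: "'a \<Rightarrow> real" where
  "risk x \<equiv> cond_expect q Y x (f x)"

lemma mean_integrable:
  assumes "x \<in> X"
  shows "set_integrable lborel Y (\<lambda>y. q x y * y)"
proof -
  have [measurable]: "q x \<in> borel_measurable borel" "Y \<in> sets borel"
    using prob_density_onD(1)[OF q_dens[OF assms]] Y_meas by simp_all
  have "set_integrable lborel Y (\<lambda>y. \<bar>q x y * y\<bar>)"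
    using abs_mean_int[OF assms] prob_density_onD(2)[OF q_dens[OF assms]]
    by (subst set_integrable_cong[OF refl refl, where f' = "\<lambda>y. q x y * \<bar>y\<bar>"]) (auto simp: abs_mult)
  moreover have "set_borel_measurable lborel Y (\<lambda>y. q x y * y)"
    unfolding set_borel_measurable_def measurable_lborel2 by measurable
  ultimately show ?thesis
    using set_integrable_abs_iff by blast
qed

lemma risk_integrable:
  assumes "x \<in> X"
  shows "set_integrable lborel Y (\<lambda>y. q x y * f x y)"
  using abs_risk_int[OF assms] f_nonneg[OF assms]
  by (subst set_integrable_cong[OF refl refl, where f' = "\<lambda>y. q x y * \<bar>f x y\<bar>"]) auto

lemma lam_Y_nonneg:
  assumes "x \<in> X"
  shows "0 \<le> lam_Y"
  using lipschitz_Y[OF assms] by (auto simp: lipschitz_on_def)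

lemma f_le_lipschitz_X:
  assumes "x \<in> X" "x' \<in> X" "y \<in> Y"
  shows "f x' y \<le> f x y + lam_X * norm (x - x')"
  using lipschitz_onD[OF lipschitz_X[OF assms(3)] assms(2,1)] by (auto simp: dist_norm norm_minus_commute)

lemma shifted_risk_integrable:
  assumes x: "x \<in> X" and x': "x' \<in> X"
  shows "set_integrable lborel Y (\<lambda>y. q x y * f x' y)"
proof (rule set_integrable_bound[OF density_integral_affine(1)[OF q_dens[OF x] risk_integrable[OF x],
      of "lam_X * norm (x - x')" 1]])
  have [measurable]: "q x \<in> borel_measurable borel" "Y \<in> sets borel"
    "(\<lambda>y. f x' y) \<in> borel_measurable borel"
    using prob_density_onD(1)[OF q_dens[OF x]] Y_meas measurable_Pair2[OF f_meas[unfolded lborel_prod[symmetric]], of x']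
    by (simp_all add: lborel_prod)
  show "set_borel_measurable lborel Y (\<lambda>y. q x y * f x' y)"
    unfolding set_borel_measurable_def measurable_lborel2 by measurable
  show "AE y in lborel. y \<in> Y \<longrightarrow>
      norm (q x y * f x' y) \<le> norm (q x y * (lam_X * norm (x - x') + 1 * f x y))"
  proof (rule AE_I2, rule impI)
    fix y assume y: "y \<in> Y"
    have "q x y * f x' y \<le> q x y * (lam_X * norm (x - x') + 1 * f x y)"
      using f_le_lipschitz_X[OF x x' y] prob_density_onD(2)[OF q_dens[OF x] y] by (intro mult_left_mono) auto
    then show "norm (q x y * f x' y) \<le> norm (q x y * (lam_X * norm (x - x') + 1 * f x y))"
      using prob_density_onD(2)[OF q_dens[OF x] y] f_nonneg[OF x' y] by simp
  qed
qed

lemma mean_in_Y: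
  assumes "x \<in> X"
  shows "mean x \<in> Y"
  using density_mean_in_interior[OF q_dens[OF assms] Y_meas _ mean_integrable[OF assms]]
    convex_Y[OF assms] interior_subset
  unfolding cond_expect_def convex_on_def by blast

lemma risk_nonneg:
  assumes "x \<in> X"
  shows "0 \<le> risk x"
  unfolding cond_expect_def set_lebesgue_integral_def
  using prob_density_onD(2)[OF q_dens[OF assms]] f_nonneg[OF assms]
  by (intro Bochner_Integration.integral_nonneg) (auto simp: indicator_def)

lemma risk_le_transfer:
  assumes x: "x \<in> X" and x': "x' \<in> X"
  shows "risk x \<le> risk x' + lam_Y * eps + (lam_X + lam_Y * lam_p) * norm (x - x')"
proof -
  have "risk x \<le> cond_expect q Y x (f x') + lam_X * norm (x - x')"
  proof -
    have "risk x \<le> (LINT y:Y|lborel. q x y * (lam_X * norm (x - x') + 1 * f x' y))"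
      unfolding cond_expect_def
    proof (rule set_integral_mono[OF risk_integrable[OF x]
          density_integral_affine(1)[OF q_dens[OF x] shifted_risk_integrable[OF x x']]])
      fix y assume y: "y \<in> Y"
      show "q x y * f x y \<le> q x y * (lam_X * norm (x - x') + 1 * f x' y)"
        using f_le_lipschitz_X[OF x' x y] prob_density_onD(2)[OF q_dens[OF x] y]
        by (intro mult_left_mono) (auto simp: norm_minus_commute)
    qed
    then show ?thesis
      using density_integral_affine(2)[OF q_dens[OF x] shifted_risk_integrable[OF x x'],
          of "lam_X * norm (x - x')" 1]
      by (simp add: cond_expect_def)
  qed
  also have "cond_expect q Y x (f x') \<le> f x' (mean x) + lam_Y * eps"
  proof -
    have "cond_expect q Y x (f x') \<le> f x' (mean x) + lam_Y * cond_expect q Y x (\<lambda>y. \<bar>y - mean x\<bar>)"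
      using density_lipschitz_le[OF q_dens[OF x] mean_in_Y[OF x] lipschitz_Y[OF x']
          shifted_risk_integrable[OF x x'] density_abs_dev_integrable[OF q_dens[OF x] mean_integrable[OF x]]]
      by (simp only: cond_expect_def)
    then show ?thesis
      using mean_dev_le[OF x] lam_Y_nonneg[OF x] by (meson add_left_mono mult_left_mono order_trans)
  qed
  also have "f x' (mean x) \<le> f x' (mean x') + lam_Y * (lam_p * norm (x - x'))"
  proof -
    have "f x' (mean x) \<le> f x' (mean x') + lam_Y * \<bar>mean x - mean x'\<bar>"
      using lipschitz_onD[OF lipschitz_Y[OF x'] mean_in_Y[OF x] mean_in_Y[OF x']] by (auto simp: dist_real_def)
    then show ?thesis
      using mean_lipschitz[OF x x'] lam_Y_nonneg[OF x] by (meson add_left_mono mult_left_mono order_trans)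
  qed
  also have "f x' (mean x') \<le> risk x'"
    unfolding cond_expect_def
    by (rule density_jensen[OF q_dens[OF x'] Y_meas convex_Y[OF x'] mean_integrable[OF x'] risk_integrable[OF x']])
  finally show ?thesis
    by (simp add: algebra_simps)
qed

lemma lam_X_nonneg:
  assumes "x \<in> X"
  shows "0 \<le> lam_X"
  using lipschitz_X[OF mean_in_Y[OF assms]] by (auto simp: lipschitz_on_def)

lemma risk_le_nearest_point:
  assumes LX: "finite LX" "LX \<noteq> {}" "LX \<subseteq> X" and x: "x \<in> X"
    and risk_LX: "\<And>xj. xj \<in> LX \<Longrightarrow> risk xj \<le> eps_L"
  shows "risk x \<le> (lam_X + lam_Y * lam_p) * Min ((\<lambda>xj. norm (x - xj)) ` LX) + lam_Y * eps + eps_L"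
proof -
  have "Min ((\<lambda>xj. norm (x - xj)) ` LX) \<in> (\<lambda>xj. norm (x - xj)) ` LX"
    using LX(1,2) by (intro Min_in) auto
  then obtain xk where xk: "xk \<in> LX" and min: "Min ((\<lambda>xj. norm (x - xj)) ` LX) = norm (x - xk)"
    by auto
  show ?thesis
    using risk_le_transfer[OF x, of xk] risk_LX[OF xk] xk LX(3) unfolding min by auto
qed

end

theorem theorem1:
  fixes X :: "'a::euclidean_space set" and Y :: "real set"
    and pD pL :: "'a \<times> real \<Rightarrow> real"
    and q :: "'a \<Rightarrow> real \<Rightarrow> real"
    and L :: "('a \<times> real) set"
    and l :: "'a \<Rightarrow> real \<Rightarrow> 'm \<Rightarrow> real" and mL :: 'm
    and eps lam_p eps_L lam_lX lam_lY :: real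
  assumes X_bounded: "bounded X"
    and X_meas: "X \<in> sets lborel" and Y_meas: "Y \<in> sets lborel"
    and pD_dens: "prob_density_on (X \<times> Y) pD"
    and pL_dens: "prob_density_on (X \<times> Y) pL"
    and q_meas: "(\<lambda>z. q (fst z) (snd z)) \<in> borel_measurable lborel"
    and q_dens: "\<forall>x\<in>X. prob_density_on Y (q x)"
    and pD_cond: "\<forall>x\<in>X. \<forall>y\<in>Y. pD (x, y) = marginal pD Y x * q x y"
    and pL_cond: "\<forall>x\<in>X. \<forall>y\<in>Y. pL (x, y) = marginal pL Y x * q x y"
    and L_fin: "finite L" and L_ne: "L \<noteq> {}" and L_sub: "L \<subseteq> X \<times> Y"
    and l_nonneg: "\<forall>x\<in>X. \<forall>y\<in>Y. 0 \<le> l x y mL"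
    and l_meas: "(\<lambda>z. l (fst z) (snd z) mL) \<in> borel_measurable lborel"
    \<comment> \<open>(A1)\<close>
    and A1_int: "\<forall>x\<in>X. set_integrable lborel Y (\<lambda>y. q x y * \<bar>y\<bar>)"
    and eps_nonneg: "0 \<le> eps"
    and A1_eps: "\<forall>x\<in>X. cond_expect q Y x (\<lambda>y. \<bar>y - cond_expect q Y x (\<lambda>y. y)\<bar>) \<le> eps"
    and lp_nonneg: "0 \<le> lam_p"
    and A1_lip: "\<forall>x1\<in>X. \<forall>x2\<in>X.
        \<bar>cond_expect q Y x1 (\<lambda>y. y) - cond_expect q Y x2 (\<lambda>y. y)\<bar> \<le> lam_p * norm (x1 - x2)"
    \<comment> \<open>(A2)\<close>
    and epsL_nonneg: "0 \<le> eps_L"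
    and A2_L: "\<forall>(xj, yj)\<in>L. cond_expect q Y xj (\<lambda>y. l xj y mL) \<le> eps_L"
    and A2_lipX: "\<forall>y\<in>Y. lam_lX-lipschitz_on X (\<lambda>x. l x y mL)"
    and A2_lipY: "\<forall>x\<in>X. lam_lY-lipschitz_on Y (\<lambda>y. l x y mL)"
    and A2_conv: "\<forall>x\<in>X. convex_on Y (\<lambda>y. l x y mL)"
    and A2_int: "\<forall>x\<in>X. set_integrable lborel Y (\<lambda>y. q x y * \<bar>l x y mL\<bar>)"
  shows "joint_expect pD X Y (\<lambda>x y. l x y mL)
     \<le> (lam_lX + lam_lY * lam_p) * weighted_fill_distance (fst ` L) X (marginal pL Y) (marginal pD Y)
       + lam_lY * eps + eps_L + joint_expect pL X Y (\<lambda>x y. l x y mL)"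
proof -
  interpret lipschitz_conditional_loss X Y q "\<lambda>x y. l x y mL" eps lam_p lam_lX lam_lY
    using Y_meas q_dens l_meas l_nonneg A1_int A1_eps A1_lip A2_lipX A2_lipY A2_conv A2_int
    by unfold_locales auto
  let ?C = "lam_lX + lam_lY * lam_p" and ?K = "lam_lY * eps + eps_L"
  have LX: "finite (fst ` L)" "fst ` L \<noteq> {}" "fst ` L \<subseteq> X"
    using L_fin L_ne L_sub by auto
  then obtain x0 where x0: "x0 \<in> fst ` L" "x0 \<in> X"
    by blast
  have C: "0 \<le> ?C" and K: "0 \<le> ?K"
    using lam_X_nonneg[OF x0(2)] lam_Y_nonneg[OF x0(2)] lp_nonneg eps_nonneg epsL_nonneg by simp_all
  have marginals_nonneg: "0 \<le> marginal pL Y x" "0 \<le> marginal pD Y x" if "x \<in> X" for x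
    using prob_density_onD(2)[OF prob_density_on_marginal[OF _ Y_meas] that] pL_dens pD_dens by blast+
  have "risk xj \<le> eps_L" if "xj \<in> fst ` L" for xj
    using A2_L that by auto
  then have risk_le: "risk x \<le> ?C * Min ((\<lambda>xj. norm (x - xj)) ` fst ` L) + ?K" if "x \<in> X" for x
    using risk_le_nearest_point[OF LX that] by (simp add: add.assoc)
  have "risk x \<le> ?C * diameter X + ?K" if "x \<in> X" for x
    using risk_le[OF that] mult_left_mono[OF Min_norm_diff_le_diameter[OF X_bounded LX(1) x0(1) LX(3) that] C]
    by linarith
  moreover have "fill_weight (marginal pL Y) (marginal pD Y) x * risk x
      \<le> ?C * weighted_fill_distance (fst ` L) X (marginal pL Y) (marginal pD Y) + ?K" if "x \<in> X" for x
    by (rule fill_weight_mult_le_fill_distance[OF X_bounded LX marginals_nonneg C K risk_nonneg risk_le that])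
  ultimately have "joint_expect pD X Y (\<lambda>x y. l x y mL)
      \<le> ?C * weighted_fill_distance (fst ` L) X (marginal pL Y) (marginal pD Y) + ?K
        + joint_expect pL X Y (\<lambda>x y. l x y mL)"
    using joint_expect_le_fill_weight_bound[OF X_meas Y_meas pD_dens pL_dens pD_cond[rule_format]
        pL_cond[rule_format] l_meas l_nonneg[rule_format] risk_integrable risk_nonneg]
    by blast
  then show ?thesis
    by (simp add: add.assoc)
qed

end
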